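(* Let $u$ be a nonzero Laurent polynomial with symmetry type $\mathrm{S}u(z)=\epsilon z^c$, $\epsilon\in\{\pm1\}$, $c\in\mathbb Z$. Then $\epsilon=(-1)^{Z(u,1)}$ and $\mathrm{odd}(c)=\mathrm{odd}(Z(u,1)+Z(u,-1))$.
   Context: Laurent polynomial: $u(z)=\sum_k u(k)z^k$ with finitely many nonzero complex coefficients. $u$ has symmetry type $\epsilon z^c$ if $u(z)=\epsilon z^cu(z^{-1})$, and then $\mathrm{S}u(z):=u(z)/u(z^{-1})=\epsilon z^c$. $Z(u,z_0)$ is the multiplicity of $z_0\neq0$ as a zero of $u$. $\mathrm{odd}(k):=(1-(-1)^k)/2$. *)

theory Defs
  imports "HOL-Computational_Algebra.Polynomial"
begin

text \<open>A Laurent polynomial is a finitely supported coefficient function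
  \<open>u :: int \<Rightarrow> complex\<close>, representing \<open>u(z) = \<Sum>k u(k) z^k\<close>.\<close>

definition lp_supp :: "(int \<Rightarrow> complex) \<Rightarrow> int set" where
  "lp_supp u = {k. u k \<noteq> 0}"

definition laurent_poly :: "(int \<Rightarrow> complex) \<Rightarrow> bool" where
  "laurent_poly u \<longleftrightarrow> finite (lp_supp u)"

definition lp_eval :: "(int \<Rightarrow> complex) \<Rightarrow> complex \<Rightarrow> complex" where
  "lp_eval u z = (\<Sum>k\<in>lp_supp u. u k * z powi k)"

definition has_symtype :: "(int \<Rightarrow> complex) \<Rightarrow> complex \<Rightarrow> int \<Rightarrow> bool" where
  "has_symtype u \<epsilon> c \<longleftrightarrow>
     (\<forall>z. z \<noteq> 0 \<longrightarrow> lp_eval u z = \<epsilon> * z powi c * lp_eval u (inverse z))"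

text \<open>For nonzero \<open>u\<close>, \<open>u(z) = z^m p(z)\<close> with \<open>m\<close> the lowest exponent and
  \<open>p\<close> an ordinary polynomial with \<open>p(0) \<noteq> 0\<close>.\<close>
definition lp_poly :: "(int \<Rightarrow> complex) \<Rightarrow> complex poly" where
  "lp_poly u = (let m = Min (lp_supp u); n = Max (lp_supp u) in
     Poly (map (\<lambda>i. u (m + int i)) [0..<nat (n - m) + 1]))"

definition lp_Z :: "(int \<Rightarrow> complex) \<Rightarrow> complex \<Rightarrow> nat" where
  "lp_Z u z0 = order z0 (lp_poly u)"

definition odd_ind :: "int \<Rightarrow> int" where
  "odd_ind k = (1 - (-1) ^ nat \<bar>k\<bar>) div 2"

end

theory Submission
  imports Defs
begin

text \<open>Write \<open>u(z) = z^m p(z)\<close> with \<open>p\<close> a polynomial and \<open>p(0) \<noteq> 0\<close>. The symmetry becomes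
  \<open>p(z) = \<epsilon> z^(c - 2m - deg p) p\<^sup>*(z)\<close> for the reciprocal polynomial \<open>p\<^sup>*\<close>; as \<open>p\<close> and
  \<open>p\<^sup>*\<close> both have nonzero constant term, this forces \<open>c = 2m + deg p\<close> and \<open>p = \<epsilon> p\<^sup>*\<close>.
  Writing \<open>p = (z - 1)^a (z + 1)^b r\<close> with \<open>r(\<plusminus>1) \<noteq> 0\<close>, the cofactor satisfies
  \<open>r = \<epsilon> (-1)^a r\<^sup>*\<close>; evaluating at \<open>1\<close> gives \<open>\<epsilon> = (-1)^a\<close>, and evaluating at \<open>-1\<close> shows
  that \<open>deg r\<close> is even. Hence \<open>c \<equiv> deg p \<equiv> a + b (mod 2)\<close>.\<close>

lemma poly_ext_nonzero:
  fixes p q :: "'a::{idom, ring_char_0} poly"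
  assumes "\<And>z. z \<noteq> 0 \<Longrightarrow> poly p z = poly q z"
  shows "p = q"
proof -
  have "[:0, 1:] * p = [:0, 1:] * q"
    by (rule poly_ext) (use assms in auto)
  then show ?thesis by simp
qed

lemma poly_eq_power_mult_exponent_0:
  fixes p q :: "'a::{idom, ring_char_0} poly"
  assumes "\<And>z. z \<noteq> 0 \<Longrightarrow> poly p z = z ^ n * poly q z" and "poly p 0 \<noteq> 0"
  shows "n = 0"
proof -
  have "p = monom 1 n * q"
    by (rule poly_ext_nonzero) (simp add: assms(1) poly_monom)
  then have "poly p 0 = 0 ^ n * poly q 0"
    by (simp add: poly_monom)
  with assms(2) show ?thesis by (cases n) auto
qed

lemma poly_eq_power_int_mult_imp_eq:
  fixes p q :: "'a::field_char_0 poly"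
  assumes eq: "\<And>z. z \<noteq> 0 \<Longrightarrow> poly p z = z powi k * poly q z"
    and "poly p 0 \<noteq> 0" and "poly q 0 \<noteq> 0"
  shows "k = 0 \<and> p = q"
proof -
  have "k = 0"
  proof (cases "k \<ge> 0")
    case True
    define n where "n = nat k"
    with True have k: "k = int n" by simp
    have "poly p z = z ^ n * poly q z" if "z \<noteq> 0" for z
      using eq[OF that] by (simp add: k)
    then have "n = 0" using \<open>poly p 0 \<noteq> 0\<close> by (rule poly_eq_power_mult_exponent_0)
    with k show ?thesis by simp
  next
    case False
    define n where "n = nat (- k)"
    with False have k: "k = - int n" by simp
    have "poly q z = z ^ n * poly p z" if "z \<noteq> 0" for z
      using eq[OF that] that by (simp add: k power_int_minus field_simps)
    then have "n = 0" using \<open>poly q 0 \<noteq> 0\<close> by (rule poly_eq_power_mult_exponent_0)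
    with k show ?thesis by simp
  qed
  moreover have "p = q"
    by (rule poly_ext_nonzero) (simp add: eq \<open>k = 0\<close>)
  ultimately show ?thesis ..
qed

lemma reflect_poly_root_factors:
  fixes r :: "'a::idom poly"
  shows "reflect_poly ([:-1, 1:] ^ a * [:1, 1:] ^ b * r)
    = smult ((-1) ^ a) ([:-1, 1:] ^ a * [:1, 1:] ^ b * reflect_poly r)"
proof -
  have minus: "reflect_poly [:-1, 1:] = smult (-1) [:-1, 1::'a:]"
    and plus: "reflect_poly [:1, 1:] = [:1, 1::'a:]"
    by (simp_all add: reflect_poly_def cCons_def)
  show ?thesis
    unfolding reflect_poly_mult reflect_poly_power minus plus smult_power by (simp add: mult_ac)
qed

lemma self_reciprocal_sign_degree:
  fixes r :: "'a::field_char_0 poly"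
  assumes r: "r = smult \<delta> (reflect_poly r)" and "poly r 1 \<noteq> 0" and "poly r (-1) \<noteq> 0"
  shows "\<delta> = 1 \<and> even (degree r)"
proof -
  have "poly r 1 = \<delta> * poly r 1"
    by (subst r) (simp add: poly_reflect_poly_nz)
  with \<open>poly r 1 \<noteq> 0\<close> have "\<delta> = 1" by simp
  have "poly r (-1) = (-1) ^ degree r * poly r (-1)"
    by (subst r) (simp add: poly_reflect_poly_nz \<open>\<delta> = 1\<close>)
  with \<open>poly r (-1) \<noteq> 0\<close> have "(-1 :: 'a) ^ degree r = 1" by simp
  then have "even (degree r)" by (cases "even (degree r)") auto
  with \<open>\<delta> = 1\<close> show ?thesis ..
qed

lemma self_reciprocal_sign_order_parity:
  fixes p :: "'a::field_char_0 poly"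
  assumes "p \<noteq> 0" and p: "p = smult \<epsilon> (reflect_poly p)"
  shows "\<epsilon> = (-1) ^ order 1 p \<and> even (degree p + order 1 p + order (-1) p)"
proof -
  define a where "a = order 1 p"
  define b where "b = order (-1) p"
  obtain q where q: "p = [:-1, 1:] ^ a * q" and "\<not> [:-1, 1:] dvd q"
    using order_decomp[OF \<open>p \<noteq> 0\<close>, of 1] by (auto simp: a_def)
  have "q \<noteq> 0" using q \<open>p \<noteq> 0\<close> by auto
  have "order (-1) ([:-1, 1:] ^ a :: 'a poly) = 0"
    by (rule order_0I) simp
  then have "order (-1) q = b"
    using order_mult[of "[:-1, 1:] ^ a" q "-1"] \<open>p \<noteq> 0\<close> by (simp add: b_def q)
  then obtain r where r: "q = [:1, 1:] ^ b * r" and "\<not> [:1, 1:] dvd r"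
    using order_decomp[OF \<open>q \<noteq> 0\<close>, of "-1"] by auto
  have "poly q 1 \<noteq> 0" "poly r (-1) \<noteq> 0"
    using \<open>\<not> [:-1, 1:] dvd q\<close> \<open>\<not> [:1, 1:] dvd r\<close> by (simp_all add: poly_eq_0_iff_dvd)
  then have "poly r 1 \<noteq> 0" by (simp add: r)
  define F :: "'a poly" where "F = [:-1, 1:] ^ a * [:1, 1:] ^ b"
  have pF: "p = F * r" by (simp add: F_def q r mult.assoc)
  have "F * r = F * smult (\<epsilon> * (-1) ^ a) (reflect_poly r)"
    using p reflect_poly_root_factors[of a b r] by (simp add: pF F_def mult_ac)
  moreover have "F \<noteq> 0" by (simp add: F_def)
  ultimately have "r = smult (\<epsilon> * (-1) ^ a) (reflect_poly r)"
    using mult_left_cancel by blast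
  then have "\<epsilon> * (-1) ^ a = 1" and "even (degree r)"
    using self_reciprocal_sign_degree \<open>poly r 1 \<noteq> 0\<close> \<open>poly r (-1) \<noteq> 0\<close> by blast+
  moreover have "(-1 :: 'a) ^ a * (-1) ^ a = 1"
    by (simp flip: power_add)
  ultimately have "\<epsilon> = (-1) ^ a"
    by (metis mult.assoc mult.commute mult_1)
  have "r \<noteq> 0" using \<open>q \<noteq> 0\<close> r by auto
  then have "degree p = a + b + degree r"
    by (simp add: pF F_def degree_mult_eq degree_power_eq)
  with \<open>even (degree r)\<close> have "even (degree p + a + b)" by presburger
  with \<open>\<epsilon> = (-1) ^ a\<close> show ?thesis
    by (simp add: a_def b_def)
qed

lemma coeff_lp_poly:
  assumes "laurent_poly u" and "u \<noteq> (\<lambda>_. 0)"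
  shows "coeff (lp_poly u) i = u (Min (lp_supp u) + int i)"
proof -
  define m where "m = Min (lp_supp u)"
  define n where "n = Max (lp_supp u)"
  have "finite (lp_supp u)"
    using assms by (simp add: laurent_poly_def)
  have "coeff (lp_poly u) i = nth_default 0 (map (\<lambda>i. u (m + int i)) [0..<nat (n - m) + 1]) i"
    unfolding lp_poly_def Let_def m_def n_def coeff_Poly_eq ..
  also have "\<dots> = u (m + int i)"
  proof (cases "i < nat (n - m) + 1")
    case False
    then have "n < m + int i" by linarith
    moreover have "k \<le> n" if "k \<in> lp_supp u" for k
      using that \<open>finite (lp_supp u)\<close> by (simp add: n_def)
    ultimately have "u (m + int i) = 0"
      by (force simp: lp_supp_def)
    with False show ?thesis by (simp add: nth_default_def del: upt_Suc)
  qed (simp add: nth_default_def del: upt_Suc)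
  finally show ?thesis unfolding m_def .
qed

lemma poly_lp_poly_0_neq_0:
  assumes "laurent_poly u" and "u \<noteq> (\<lambda>_. 0)"
  shows "poly (lp_poly u) 0 \<noteq> 0"
proof -
  have "finite (lp_supp u)" "lp_supp u \<noteq> {}"
    using assms by (auto simp: laurent_poly_def lp_supp_def)
  then have "Min (lp_supp u) \<in> lp_supp u" by (rule Min_in)
  moreover have "poly (lp_poly u) 0 = u (Min (lp_supp u))"
    using coeff_lp_poly[OF assms, of 0] by (simp add: poly_0_coeff_0)
  ultimately show ?thesis by (simp add: lp_supp_def)
qed

lemma lp_eval_eq_powi_mult_poly:
  assumes "laurent_poly u" and "u \<noteq> (\<lambda>_. 0)" and "z \<noteq> 0"
  shows "lp_eval u z = z powi Min (lp_supp u) * poly (lp_poly u) z"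
proof -
  define p where "p = lp_poly u"
  define m where "m = Min (lp_supp u)"
  define I where "I = {i. coeff p i \<noteq> 0}"
  have coeff_p: "coeff p i = u (m + int i)" for i
    using coeff_lp_poly[OF assms(1,2)] by (simp add: p_def m_def)
  have "finite (lp_supp u)"
    using assms by (simp add: laurent_poly_def)
  have supp: "lp_supp u = (\<lambda>i. m + int i) ` I"
  proof (intro set_eqI iffI)
    fix k assume "k \<in> lp_supp u"
    then have "m \<le> k" using \<open>finite (lp_supp u)\<close> by (simp add: m_def)
    then have "k = m + int (nat (k - m))" by simp
    with \<open>k \<in> lp_supp u\<close> show "k \<in> (\<lambda>i. m + int i) ` I"
      by (metis (mono_tags) I_def coeff_p image_eqI lp_supp_def mem_Collect_eq)
  qed (auto simp: I_def coeff_p lp_supp_def)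
  have "I \<subseteq> {..degree p}"
    by (auto simp: I_def le_degree)
  have "lp_eval u z = (\<Sum>i\<in>I. u (m + int i) * z powi (m + int i))"
    unfolding lp_eval_def supp by (subst sum.reindex) (auto simp: inj_on_def)
  also have "\<dots> = z powi m * (\<Sum>i\<in>I. coeff p i * z ^ i)"
    using \<open>z \<noteq> 0\<close> by (simp add: sum_distrib_left coeff_p power_int_add mult_ac)
  also have "(\<Sum>i\<in>I. coeff p i * z ^ i) = poly p z"
    unfolding poly_altdef using \<open>I \<subseteq> {..degree p}\<close>
    by (intro sum.mono_neutral_left) (auto simp: I_def)
  finally show ?thesis by (simp add: p_def m_def)
qed

lemma lp_poly_self_reciprocal:
  assumes "laurent_poly u" and "u \<noteq> (\<lambda>_. 0)" and "\<epsilon> \<noteq> 0" and "has_symtype u \<epsilon> c"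
  shows "c = 2 * Min (lp_supp u) + int (degree (lp_poly u))
    \<and> lp_poly u = smult \<epsilon> (reflect_poly (lp_poly u))"
proof -
  define p where "p = lp_poly u"
  define m where "m = Min (lp_supp u)"
  define k where "k = c - 2 * m - int (degree p)"
  have "poly p z = z powi k * poly (smult \<epsilon> (reflect_poly p)) z" if "z \<noteq> 0" for z
  proof -
    define w where "w = z powi m"
    define Q where "Q = poly p (inverse z)"
    have "w \<noteq> 0" using that by (simp add: w_def)
    have split: "z powi c = z powi k * w * w * z ^ degree p"
    proof -
      have "c = k + m + m + int (degree p)" by (simp add: k_def)
      then show ?thesis
        using that unfolding w_def by (simp only: power_int_add power_int_of_nat simp_thms)
    qed
    have "lp_eval u z = w * poly p z" and "lp_eval u (inverse z) = inverse w * Q"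
      using lp_eval_eq_powi_mult_poly[OF assms(1,2)] that
      by (simp_all add: p_def m_def w_def Q_def power_int_inverse)
    then have "w * poly p z = \<epsilon> * z powi c * (inverse w * Q)"
      using assms(4) that unfolding has_symtype_def by metis
    also have "\<dots> = w * (z powi k * (\<epsilon> * (z ^ degree p * Q))) * (w * inverse w)"
      unfolding split by (simp only: mult_ac)
    also have "\<dots> = w * (z powi k * poly (smult \<epsilon> (reflect_poly p)) z)"
      using \<open>w \<noteq> 0\<close> that by (simp add: poly_reflect_poly_nz Q_def)
    finally show ?thesis using \<open>w \<noteq> 0\<close> by simp
  qed
  moreover have "poly p 0 \<noteq> 0"
    using poly_lp_poly_0_neq_0[OF assms(1,2)] by (simp add: p_def)
  moreover from this have "poly (smult \<epsilon> (reflect_poly p)) 0 \<noteq> 0"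
    using assms(3) by auto
  ultimately have "k = 0 \<and> p = smult \<epsilon> (reflect_poly p)"
    by (rule poly_eq_power_int_mult_imp_eq)
  then show ?thesis by (simp add: k_def p_def m_def)
qed

lemma odd_ind_eq_of_bool: "odd_ind k = of_bool (odd k)"
  unfolding odd_ind_def by (cases "k \<ge> 0") (auto simp: even_nat_iff)

theorem lemma3p2:
  fixes u :: "int \<Rightarrow> complex" and \<epsilon> :: complex and c :: int
  assumes "laurent_poly u"
    and "u \<noteq> (\<lambda>_. 0)"
    and "\<epsilon> \<in> {1, -1}"
    and "has_symtype u \<epsilon> c"
  shows "\<epsilon> = (-1) ^ lp_Z u 1
    \<and> odd_ind c = odd_ind (int (lp_Z u 1 + lp_Z u (-1)))"
proof -
  define p where "p = lp_poly u"
  have "\<epsilon> \<noteq> 0" using assms(3) by auto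
  then have c: "c = 2 * Min (lp_supp u) + int (degree p)"
    and p: "p = smult \<epsilon> (reflect_poly p)"
    using lp_poly_self_reciprocal[OF assms(1,2) _ assms(4)] by (simp_all add: p_def)
  have "p \<noteq> 0"
    using poly_lp_poly_0_neq_0[OF assms(1,2)] by (auto simp: p_def)
  then have "\<epsilon> = (-1) ^ order 1 p" and "even (degree p + order 1 p + order (-1) p)"
    using self_reciprocal_sign_order_parity p by blast+
  moreover from c this(2) have "even c \<longleftrightarrow> even (order 1 p + order (-1) p)"
    by presburger
  ultimately show ?thesis
    by (simp add: lp_Z_def p_def odd_ind_eq_of_bool)
qed

end
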